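(* Let $ABC$ be a triangle with incenter $I$ and orthocenter $H$, and let $H_A, H_B, H_C$ be the orthocenters of the triangles $BIC$, $CIA$, $AIB$ respectively. Let $O_A, O_B, O_C$ be the circumcenters of the triangles $AH_BH_C$, $BH_CH_A$, $CH_AH_B$ respectively. Then $H$ is the orthocenter of triangle $O_AO_BO_C$, and $I$ is the Euler reflection point of triangle $O_AO_BO_C$.
   Context: The Euler reflection point of a (non-equilateral) triangle is the common point of the reflections of its Euler line in the three sidelines of the triangle. *)

theory Defs
  imports "HOL-Analysis.Analysis"
begin

definition triangle :: "complex \<Rightarrow> complex \<Rightarrow> complex \<Rightarrow> bool" where
  "triangle A B C \<longleftrightarrow> \<not> collinear {A, B, C}"

definition equilateral :: "complex \<Rightarrow> complex \<Rightarrow> complex \<Rightarrow> bool" where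
  "equilateral A B C \<longleftrightarrow> dist A B = dist B C \<and> dist B C = dist C A"

definition incenter :: "complex \<Rightarrow> complex \<Rightarrow> complex \<Rightarrow> complex" where
  "incenter A B C =
     (dist B C *\<^sub>R A + dist C A *\<^sub>R B + dist A B *\<^sub>R C) /\<^sub>R (dist B C + dist C A + dist A B)"

definition orthocenter :: "complex \<Rightarrow> complex \<Rightarrow> complex \<Rightarrow> complex" where
  "orthocenter A B C =
     (THE H. inner (H - A) (B - C) = 0 \<and> inner (H - B) (C - A) = 0 \<and> inner (H - C) (A - B) = 0)"

definition circumcenter :: "complex \<Rightarrow> complex \<Rightarrow> complex \<Rightarrow> complex" where
  "circumcenter A B C = (THE X. dist X A = dist X B \<and> dist X B = dist X C)"

definition centroid :: "complex \<Rightarrow> complex \<Rightarrow> complex \<Rightarrow> complex" where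
  "centroid A B C = (A + B + C) / 3"

definition line :: "complex \<Rightarrow> complex \<Rightarrow> complex set" where
  "line P Q = {P + t *\<^sub>R (Q - P) | t. True}"

text \<open>Euler line of a (non-equilateral) triangle: the line through circumcenter and centroid.\<close>
definition euler_line :: "complex \<Rightarrow> complex \<Rightarrow> complex \<Rightarrow> complex set" where
  "euler_line A B C = line (circumcenter A B C) (centroid A B C)"

definition reflect :: "complex \<Rightarrow> complex \<Rightarrow> complex \<Rightarrow> complex" where
  "reflect P Q X = P + (Q - P) * cnj ((X - P) / (Q - P))"

definition euler_reflection_point :: "complex \<Rightarrow> complex \<Rightarrow> complex \<Rightarrow> complex \<Rightarrow> bool" where
  "euler_reflection_point E A B C \<longleftrightarrow>
     triangle A B C \<and> \<not> equilateral A B C \<and>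
     E \<in> reflect B C ` euler_line A B C \<and>
     E \<in> reflect C A ` euler_line A B C \<and>
     E \<in> reflect A B ` euler_line A B C"

end

theory Submission
  imports Defs
begin

text \<open>Apply a similarity \<open>p \<mapsto> M + w p\<close> taking the circumcircle of \<open>ABC\<close> to the unit circle and
  write the vertices as \<open>x\<^sup>2, y\<^sup>2, z\<^sup>2\<close>, the signs of the square roots chosen so that
  \<open>-yz, -zx, -xy\<close> are the midpoints of the arcs opposite to the vertices; then the incenter is
  \<open>I = -e\<close> with \<open>e = xy + yz + zx\<close>. The circumcenter of \<open>BIC\<close> is the arc midpoint \<open>-yz\<close>, so
  Sylvester's relation gives \<open>H\<^sub>A = (y + z)\<^sup>2 - e\<close>, and a direct computation gives
  \<open>O\<^sub>A = s x - 2e\<close> with \<open>s = x + y + z\<close>. Hence \<open>O\<^sub>AO\<^sub>BO\<^sub>C\<close> is the image of the triangle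
  \<open>xyz\<close> under \<open>u \<mapsto> s u - 2e\<close>. For a triangle \<open>xyz\<close> inscribed in the unit circle the
  orthocenter is \<open>s\<close> and the Euler reflection point is \<open>e / s\<close>; their images are
  \<open>s\<^sup>2 - 2e = x\<^sup>2 + y\<^sup>2 + z\<^sup>2 = H\<close> and \<open>-e = I\<close>.\<close>

section \<open>Triangle centres in the complex plane\<close>

lemma collinear_3_iff_Reals: "collinear {A, B, C :: complex} \<longleftrightarrow> (C - B) / (A - B) \<in> \<real>"
  by (simp add: collinear_3 collinear_iff_Reals)

lemma triangle_distinct: "triangle A B C \<Longrightarrow> A \<noteq> B \<and> B \<noteq> C \<and> C \<noteq> A"
  by (auto simp: triangle_def insert_commute)

lemma triangle_if_concyclic:
  assumes "A \<noteq> B" "B \<noteq> C" "C \<noteq> A" "dist M A = dist M B" "dist M B = dist M C"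
  shows "triangle A B C"
proof -
  have no_middle: False
    if "P \<in> open_segment Q S" "dist M P = dist M A" "dist M Q = dist M A" "dist M S = dist M A" for P Q S
  proof -
    have "-M + P \<in> open_segment (-M + Q) (-M + S)"
      using that(1) by (simp only: open_segment_translation_eq)
    moreover have "norm (-M + X) = dist M X" for X
      by (simp add: dist_norm norm_minus_commute)
    ultimately show False
      using different_norm_3_collinear_points that(2-4) by metis
  qed
  show ?thesis
    unfolding triangle_def collinear_between_cases between_mem_segment
    using assms no_middle by (auto simp: open_segment_def)
qed

lemma dist_eq_iff_inner_eq:
  fixes X A B :: "'a::real_inner"
  shows "dist X A = dist X B \<longleftrightarrow> 2 * inner X (B - A) = inner B B - inner A A"
proof -
  have "dist X A = dist X B \<longleftrightarrow> inner (X - A) (X - A) = inner (X - B) (X - B)"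
    by (simp add: dist_norm norm_eq_sqrt_inner)
  then show ?thesis
    by (simp add: inner_diff_left inner_diff_right inner_commute algebra_simps)
qed

lemma orthogonal_to_triangle_sides_eq_0:
  assumes "triangle A B C" "inner d (B - A) = 0" "inner d (C - A) = 0"
  shows "d = 0"
proof (rule ccontr)
  assume "d \<noteq> 0"
  then have real: "u / (\<i> * d) \<in> \<real>" if "inner d u = 0" for u
    using that by (simp add: complex_is_Real_iff inner_complex_def Im_divide algebra_simps)
  have "(C - A) / (B - A) = ((C - A) / (\<i> * d)) / ((B - A) / (\<i> * d))"
    using \<open>d \<noteq> 0\<close> by (cases "B = A") (simp_all add: field_simps)
  then have "(C - A) / (B - A) \<in> \<real>"
    using real[OF assms(2)] real[OF assms(3)] by (metis Reals_divide)
  then show False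
    using assms(1) collinear_3_iff_Reals[of B A C] by (simp add: triangle_def insert_commute)
qed

lemma circumcenter_eqI:
  assumes "triangle A B C" "dist M A = dist M B" "dist M B = dist M C"
  shows "circumcenter A B C = M"
  unfolding circumcenter_def
proof (rule the_equality)
  fix X assume "dist X A = dist X B \<and> dist X B = dist X C"
  then have "dist X A = dist X B" "dist X A = dist X C" "dist M A = dist M B" "dist M A = dist M C"
    using assms(2,3) by auto
  then have "inner (X - M) (B - A) = 0" "inner (X - M) (C - A) = 0"
    unfolding dist_eq_iff_inner_eq inner_diff_left by linarith+
  then have "X - M = 0"
    by (rule orthogonal_to_triangle_sides_eq_0[OF assms(1)])
  then show "X = M"
    by simp
qed (use assms in simp)

lemma circumcenter_exists:
  assumes "triangle A B C"
  obtains M where "dist M A = dist M B" "dist M B = dist M C"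
proof -
  define f where "f X = Complex (inner X (B - A)) (inner X (C - A))" for X
  have "linear f"
    by (intro linearI) (simp_all add: f_def inner_add_left complex_eq_iff)
  moreover have "inj f"
    using orthogonal_to_triangle_sides_eq_0[OF assms]
    by (simp add: linear_injective_0[OF \<open>linear f\<close>] f_def complex_eq_iff)
  ultimately obtain M where "f M = Complex ((inner B B - inner A A) / 2) ((inner C C - inner A A) / 2)"
    by (metis linear_inj_imp_surj surjD)
  then have "dist M A = dist M B" "dist M A = dist M C"
    by (simp_all add: f_def dist_eq_iff_inner_eq)
  then show ?thesis
    by (intro that) auto
qed

lemma circumcenter_equidistant:
  assumes "triangle A B C"
  shows "dist (circumcenter A B C) A = dist (circumcenter A B C) B"
    and "dist (circumcenter A B C) B = dist (circumcenter A B C) C"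
  using circumcenter_exists[OF assms] circumcenter_eqI[OF assms] by metis+

lemma orthocenter_eqI:
  assumes "triangle A B C"
    and "inner (H - A) (B - C) = 0" "inner (H - B) (C - A) = 0" "inner (H - C) (A - B) = 0"
  shows "orthocenter A B C = H"
  unfolding orthocenter_def
proof (rule the_equality)
  fix X assume "inner (X - A) (B - C) = 0 \<and> inner (X - B) (C - A) = 0 \<and> inner (X - C) (A - B) = 0"
  then have "inner (X - H) (B - C) = 0" "inner (X - H) (C - A) = 0"
    using assms(2,3) by (simp_all add: inner_diff_left)
  then have "inner (X - H) (B - A) = 0" "inner (X - H) (C - A) = 0"
    by (simp_all add: inner_diff_right)
  then have "X - H = 0"
    by (rule orthogonal_to_triangle_sides_eq_0[OF assms(1)])
  then show "X = H"
    by simp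
qed (use assms in simp)

text \<open>Sylvester's relation \<open>OH = OA + OB + OC\<close>.\<close>
lemma orthocenter_eq_circumcenter:
  assumes "triangle A B C"
  shows "orthocenter A B C = A + B + C - 2 * circumcenter A B C"
proof (rule orthocenter_eqI[OF assms])
  define M where "M = circumcenter A B C"
  have side: "inner (P + Q - 2 * M) (P - Q) = 0" if "dist M P = dist M Q" for P Q
    using that unfolding dist_eq_iff_inner_eq by (simp add: inner_complex_def algebra_simps)
  have "dist M A = dist M B" "dist M B = dist M C" "dist M C = dist M A"
    using circumcenter_equidistant[OF assms] by (simp_all add: M_def)
  from side[OF this(2)] side[OF this(3)] side[OF this(1)]
  show "inner (A + B + C - 2 * M - A) (B - C) = 0" "inner (A + B + C - 2 * M - B) (C - A) = 0"
    "inner (A + B + C - 2 * M - C) (A - B) = 0"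
    by (simp_all add: algebra_simps)
qed

section \<open>Invariance under similarities\<close>

lemma dist_similarity: "dist (M + w * A) (M + w * B) = cmod w * dist A B"
  by (simp add: dist_mult_left)

lemma triangle_similarity:
  assumes "w \<noteq> 0"
  shows "triangle (M + w * A) (M + w * B) (M + w * C) \<longleftrightarrow> triangle A B C"
proof -
  have "(M + w * C - (M + w * B)) / (M + w * A - (M + w * B)) = (C - B) / (A - B)"
    using assms by (simp add: right_diff_distrib[symmetric])
  then show ?thesis
    by (simp add: triangle_def collinear_3_iff_Reals)
qed

lemma equilateral_similarity:
  assumes "w \<noteq> 0"
  shows "equilateral (M + w * A) (M + w * B) (M + w * C) \<longleftrightarrow> equilateral A B C"
  using assms by (simp add: equilateral_def dist_mult_left)

lemma circumcenter_similarity: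
  assumes "w \<noteq> 0" "triangle A B C"
  shows "circumcenter (M + w * A) (M + w * B) (M + w * C) = M + w * circumcenter A B C"
  using assms circumcenter_equidistant[OF assms(2)]
  by (intro circumcenter_eqI) (simp_all add: triangle_similarity dist_mult_left)

lemma orthocenter_similarity:
  assumes "w \<noteq> 0" "triangle A B C"
  shows "orthocenter (M + w * A) (M + w * B) (M + w * C) = M + w * orthocenter A B C"
proof -
  have "triangle (M + w * A) (M + w * B) (M + w * C)"
    using assms by (simp add: triangle_similarity)
  then show ?thesis
    using assms
    by (simp add: orthocenter_eq_circumcenter circumcenter_similarity) (simp add: algebra_simps)
qed

lemma incenter_similarity:
  assumes "w \<noteq> 0" "A \<noteq> B"
  shows "incenter (M + w * A) (M + w * B) (M + w * C) = M + w * incenter A B C"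
proof -
  define k a b c where "k = cmod w" and "a = dist B C" and "b = dist C A" and "c = dist A B"
  define s N where "s = a + b + c" and "N = a *\<^sub>R A + b *\<^sub>R B + c *\<^sub>R C"
  have "s \<noteq> 0"
    using assms(2) zero_le_dist[of B C] zero_le_dist[of C A] zero_less_dist_iff[of A B]
    unfolding s_def a_def b_def c_def by linarith
  have "k \<noteq> 0"
    using assms(1) by (simp add: k_def)
  have "incenter (M + w * A) (M + w * B) (M + w * C) = ((k * s) *\<^sub>R M + k *\<^sub>R (w * N)) /\<^sub>R (k * s)"
    unfolding incenter_def dist_similarity
    by (simp add: s_def N_def scaleR_conv_of_real algebra_simps flip: k_def a_def b_def c_def)
  also have "\<dots> = M + w * (N /\<^sub>R s)"
    using \<open>s \<noteq> 0\<close> \<open>k \<noteq> 0\<close> by (simp add: scaleR_add_right field_simps)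
  finally show ?thesis
    by (simp add: incenter_def s_def N_def flip: a_def b_def c_def)
qed

lemma centroid_similarity: "centroid (M + w * A) (M + w * B) (M + w * C) = M + w * centroid A B C"
  by (simp add: centroid_def field_simps)

lemma line_similarity: "line (M + w * P) (M + w * Q) = (\<lambda>X. M + w * X) ` line P Q"
proof -
  have "M + w * P + t *\<^sub>R (M + w * Q - (M + w * P)) = M + w * (P + t *\<^sub>R (Q - P))" for t
    by (simp add: scaleR_conv_of_real algebra_simps)
  then show ?thesis
    unfolding line_def by auto
qed

lemma reflect_similarity:
  assumes "w \<noteq> 0"
  shows "reflect (M + w * P) (M + w * Q) (M + w * X) = M + w * reflect P Q X"
proof -
  have "(M + w * X - (M + w * P)) / (M + w * Q - (M + w * P)) = (X - P) / (Q - P)"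
    using assms by (simp add: right_diff_distrib[symmetric])
  then show ?thesis
    by (simp add: reflect_def algebra_simps)
qed

lemma euler_line_similarity:
  assumes "w \<noteq> 0" "triangle A B C"
  shows "euler_line (M + w * A) (M + w * B) (M + w * C) = (\<lambda>X. M + w * X) ` euler_line A B C"
  using assms by (simp add: euler_line_def circumcenter_similarity centroid_similarity line_similarity)

lemma euler_reflection_point_similarity:
  assumes "w \<noteq> 0" "euler_reflection_point E A B C"
  shows "euler_reflection_point (M + w * E) (M + w * A) (M + w * B) (M + w * C)"
proof -
  have "M + w * E \<in> reflect (M + w * P) (M + w * Q) ` euler_line (M + w * A) (M + w * B) (M + w * C)"
    if "E \<in> reflect P Q ` euler_line A B C" for P Q
  proof -
    from that obtain X where "X \<in> euler_line A B C" "E = reflect P Q X"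
      by blast
    then show ?thesis
      using assms by (auto simp: euler_reflection_point_def euler_line_similarity
          reflect_similarity[symmetric])
  qed
  then show ?thesis
    using assms by (simp add: euler_reflection_point_def triangle_similarity equilateral_similarity)
qed

lemma reflect_reflect:
  assumes "P \<noteq> Q"
  shows "reflect P Q (reflect P Q X) = X"
proof -
  have "(reflect P Q X - P) / (Q - P) = cnj ((X - P) / (Q - P))"
    using assms by (simp add: reflect_def)
  then have "reflect P Q (reflect P Q X) = P + (Q - P) * ((X - P) / (Q - P))"
    by (simp add: reflect_def[of P Q "reflect P Q X"])
  then show ?thesis
    using assms by simp
qed

lemma mem_reflect_image:
  assumes "P \<noteq> Q" "reflect P Q E \<in> L"
  shows "E \<in> reflect P Q ` L"
  using assms reflect_reflect by (metis image_eqI)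

lemma mem_line_if_Reals:
  assumes "P \<noteq> Q" "(X - P) / (Q - P) \<in> \<real>"
  shows "X \<in> line P Q"
proof -
  obtain t where "(X - P) / (Q - P) = of_real t"
    using assms(2) Reals_cases by metis
  then have "X = P + t *\<^sub>R (Q - P)"
    using assms(1) by (simp add: scaleR_conv_of_real field_simps)
  then show ?thesis
    unfolding line_def by blast
qed

lemma equilateral_if_sum_eq_0:
  assumes "cmod a = r" "cmod b = r" "cmod c = r" "a + b + c = 0"
  shows "equilateral a b c"
proof -
  have side: "(dist P Q)\<^sup>2 = 3 * r\<^sup>2" if "cmod P = r" "cmod Q = r" "cmod (P + Q) = r" for P Q
    using that dot_norm[of P Q] dot_norm_neg[of P Q] by (simp add: dist_norm)
  have "cmod (a + b) = r" "cmod (b + c) = r" "cmod (c + a) = r"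
    using assms by (simp_all add: add_eq_0_iff2 add.commute add.left_commute norm_minus_commute)
  then have "(dist a b)\<^sup>2 = (dist b c)\<^sup>2" "(dist b c)\<^sup>2 = (dist c a)\<^sup>2"
    using side assms by simp_all
  then show ?thesis
    by (simp add: equilateral_def power2_eq_iff_nonneg)
qed

lemma dist_centroid:
  "(3 * dist (centroid A B C) A)\<^sup>2 = 2 * (dist A B)\<^sup>2 + 2 * (dist A C)\<^sup>2 - (dist B C)\<^sup>2"
proof -
  have "3 * dist (centroid A B C) A = cmod ((B - A) + (C - A))"
    by (simp add: centroid_def dist_norm field_simps)
  then show ?thesis
    using dot_norm[of "B - A" "C - A"] dot_norm_neg[of "B - A" "C - A"]
    by (simp add: dist_norm norm_minus_commute)
qed

lemma circumcenter_equilateral: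
  assumes "triangle A B C" "equilateral A B C"
  shows "circumcenter A B C = centroid A B C"
proof (rule circumcenter_eqI[OF assms(1)])
  define G where "G = centroid A B C"
  have "centroid B C A = G" "centroid C A B = G"
    by (simp_all add: G_def centroid_def add_ac)
  then have "3 * (dist G A)\<^sup>2 = (dist A B)\<^sup>2" "3 * (dist G B)\<^sup>2 = (dist A B)\<^sup>2"
    "3 * (dist G C)\<^sup>2 = (dist A B)\<^sup>2"
    using dist_centroid[of A B C] dist_centroid[of B C A] dist_centroid[of C A B] assms(2)
    by (simp_all add: G_def equilateral_def dist_commute power_mult_distrib)
  then have "(dist G A)\<^sup>2 = (dist G B)\<^sup>2" "(dist G B)\<^sup>2 = (dist G C)\<^sup>2"
    by linarith+
  then show "dist G A = dist G B" "dist G B = dist G C"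
    by (simp_all add: power2_eq_iff_nonneg)
qed

section \<open>Triangles inscribed in the unit circle\<close>

lemma cnj_unimodular: "cmod z = 1 \<Longrightarrow> cnj z = 1 / z"
  using divide_conv_cnj[of z 1] by simp

lemma circumcenter_unit_circle:
  assumes "cmod a = 1" "cmod b = 1" "cmod c = 1" "a \<noteq> b" "b \<noteq> c" "c \<noteq> a"
  shows "triangle a b c" and "circumcenter a b c = 0"
proof -
  have "dist 0 a = dist 0 b" "dist 0 b = dist 0 c"
    using assms by simp_all
  then show "triangle a b c" "circumcenter a b c = 0"
    using assms triangle_if_concyclic circumcenter_eqI by blast+
qed

lemma orthocenter_unit_circle:
  assumes "cmod a = 1" "cmod b = 1" "cmod c = 1" "a \<noteq> b" "b \<noteq> c" "c \<noteq> a"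
  shows "orthocenter a b c = a + b + c"
  using circumcenter_unit_circle[OF assms] by (simp add: orthocenter_eq_circumcenter)

lemma reflect_unit_chord:
  assumes "cmod y = 1" "cmod z = 1" "y \<noteq> z"
  shows "reflect y z X = y + z - y * z * cnj X"
proof -
  have "y \<noteq> 0" "z \<noteq> 0"
    using assms by auto
  then show ?thesis
    using assms by (simp add: reflect_def cnj_unimodular field_simps)
qed

lemma cnj_symmetric_unimodular:
  assumes "cmod x = 1" "cmod y = 1" "cmod z = 1"
  shows "cnj (x + y + z) = (x * y + y * z + z * x) / (x * y * z)"
    and "cnj (x * y + y * z + z * x) = (x + y + z) / (x * y * z)"
proof -
  have "x \<noteq> 0" "y \<noteq> 0" "z \<noteq> 0"
    using assms by auto
  then show "cnj (x + y + z) = (x * y + y * z + z * x) / (x * y * z)"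
    "cnj (x * y + y * z + z * x) = (x + y + z) / (x * y * z)"
    using assms by (simp_all add: cnj_unimodular field_simps)
qed

lemma reflect_unit_chord_mem_euler_line:
  assumes "cmod x = 1" "cmod y = 1" "cmod z = 1" "y \<noteq> z" "x + y + z \<noteq> 0"
  shows "reflect y z ((x * y + y * z + z * x) / (x + y + z)) \<in> line 0 ((x + y + z) / 3)"
proof (rule mem_line_if_Reals)
  define s e where "s = x + y + z" and "e = x * y + y * z + z * x"
  have "x \<noteq> 0" "y \<noteq> 0" "z \<noteq> 0" "s \<noteq> 0"
    using assms by (auto simp: s_def)
  have cnj_s: "cnj s = e / (x * y * z)" and cnj_e: "cnj e = s / (x * y * z)"
    unfolding s_def e_def using cnj_symmetric_unimodular[OF assms(1-3)] .
  then have "e \<noteq> 0"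
    using \<open>s \<noteq> 0\<close> by auto
  have "reflect y z (e / s) = y + z - y * z * (s / e)"
    using assms \<open>x \<noteq> 0\<close> \<open>y \<noteq> 0\<close> \<open>z \<noteq> 0\<close> \<open>e \<noteq> 0\<close>
    by (simp add: reflect_unit_chord cnj_s cnj_e)
  also have "\<dots> = x * (y\<^sup>2 + y * z + z\<^sup>2) / e"
    using \<open>e \<noteq> 0\<close> unfolding s_def e_def by (simp add: field_simps power2_eq_square)
  finally have ratio: "(reflect y z (e / s) - 0) / (s / 3 - 0) = 3 * x * (y\<^sup>2 + y * z + z\<^sup>2) / (s * e)"
    by (simp add: ac_simps)
  have "cnj (3 * x * (y\<^sup>2 + y * z + z\<^sup>2) / (s * e)) = 3 * x * (y\<^sup>2 + y * z + z\<^sup>2) / (s * e)"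
    using assms \<open>x \<noteq> 0\<close> \<open>y \<noteq> 0\<close> \<open>z \<noteq> 0\<close> \<open>s \<noteq> 0\<close> \<open>e \<noteq> 0\<close>
    by (simp add: cnj_s cnj_e cnj_unimodular field_simps power2_eq_square)
  then show "(reflect y z (e / s) - 0) / (s / 3 - 0) \<in> \<real>"
    unfolding ratio Reals_cnj_iff .
  show "0 \<noteq> s / 3"
    using \<open>s \<noteq> 0\<close> by simp
qed

lemma euler_reflection_point_unit_circle:
  assumes "cmod x = 1" "cmod y = 1" "cmod z = 1" "x \<noteq> y" "y \<noteq> z" "z \<noteq> x" "x + y + z \<noteq> 0"
  shows "euler_reflection_point ((x * y + y * z + z * x) / (x + y + z)) x y z"
proof -
  note circ = circumcenter_unit_circle[OF assms(1-6)]
  have cyclic: "y * z + z * x + x * y = x * y + y * z + z * x" "y + z + x = x + y + z"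
    "z * x + x * y + y * z = x * y + y * z + z * x" "z + x + y = x + y + z"
    by (simp_all add: ac_simps)
  have "\<not> equilateral x y z"
  proof
    assume "equilateral x y z"
    then have "centroid x y z = 0"
      using circumcenter_equilateral circ by simp
    then show False
      using assms(7) by (simp add: centroid_def)
  qed
  moreover have "euler_line x y z = line 0 ((x + y + z) / 3)"
    by (simp add: euler_line_def circ centroid_def)
  moreover have "reflect y z ((x * y + y * z + z * x) / (x + y + z)) \<in> line 0 ((x + y + z) / 3)"
    "reflect z x ((x * y + y * z + z * x) / (x + y + z)) \<in> line 0 ((x + y + z) / 3)"
    "reflect x y ((x * y + y * z + z * x) / (x + y + z)) \<in> line 0 ((x + y + z) / 3)"
    using reflect_unit_chord_mem_euler_line[of x y z] reflect_unit_chord_mem_euler_line[of y z x]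
      reflect_unit_chord_mem_euler_line[of z x y] assms
    unfolding cyclic by simp_all
  ultimately show ?thesis
    unfolding euler_reflection_point_def using circ assms by (simp add: mem_reflect_image)
qed

section \<open>The incenter\<close>

text \<open>For unit \<open>y, z\<close> this is \<open>2 sin (arg y - arg z)\<close>, a signed version of the chord length
  \<open>dist (y\<^sup>2) (z\<^sup>2)\<close>.\<close>
definition signed_chord :: "complex \<Rightarrow> complex \<Rightarrow> real" where
  "signed_chord y z = 2 * Im (y * cnj z)"

lemma signed_chord_scale:
  "signed_chord (of_real a * y) (of_real b * z) = a * b * signed_chord y z"
  by (simp add: signed_chord_def algebra_simps)

lemma signed_chord_unimodular:
  assumes "cmod y = 1" "cmod z = 1"
  shows "y / z - z / y = \<i> * complex_of_real (signed_chord y z)"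
    and "\<bar>signed_chord y z\<bar> = dist (y\<^sup>2) (z\<^sup>2)"
proof -
  show diff: "y / z - z / y = \<i> * complex_of_real (signed_chord y z)"
    using assms complex_diff_cnj[of "y * cnj z"]
    by (simp add: signed_chord_def divide_conv_cnj ac_simps)
  have "y \<noteq> 0" "z \<noteq> 0"
    using assms by auto
  have "dist (y\<^sup>2) (z\<^sup>2) = cmod ((y\<^sup>2 - z\<^sup>2) / (y * z))"
    using assms by (simp add: dist_norm norm_divide norm_mult)
  also have "(y\<^sup>2 - z\<^sup>2) / (y * z) = y / z - z / y"
    using \<open>y \<noteq> 0\<close> \<open>z \<noteq> 0\<close> by (simp add: field_simps power2_eq_square)
  finally show "\<bar>signed_chord y z\<bar> = dist (y\<^sup>2) (z\<^sup>2)"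
    by (simp add: diff norm_mult)
qed

lemma incenter_identity:
  fixes x y z :: complex
  assumes "x \<noteq> 0" "y \<noteq> 0" "z \<noteq> 0"
  shows "(y / z - z / y) * x\<^sup>2 + (z / x - x / z) * y\<^sup>2 + (x / y - y / x) * z\<^sup>2
    = - ((y / z - z / y) + (z / x - x / z) + (x / y - y / x)) * (x * y + y * z + z * x)"
  using assms by (simp add: field_simps power2_eq_square)

lemma incenter_unit_circle:
  assumes "cmod x = 1" "cmod y = 1" "cmod z = 1" "y\<^sup>2 \<noteq> z\<^sup>2" "\<epsilon> \<noteq> 0"
    and "signed_chord y z = \<epsilon> * dist (y\<^sup>2) (z\<^sup>2)" "signed_chord z x = \<epsilon> * dist (z\<^sup>2) (x\<^sup>2)"
    "signed_chord x y = \<epsilon> * dist (x\<^sup>2) (y\<^sup>2)"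
  shows "incenter (x\<^sup>2) (y\<^sup>2) (z\<^sup>2) = - (x * y + y * z + z * x)"
proof -
  define a b c where "a = dist (y\<^sup>2) (z\<^sup>2)" and "b = dist (z\<^sup>2) (x\<^sup>2)" and "c = dist (x\<^sup>2) (y\<^sup>2)"
  have "a + b + c \<noteq> 0"
    using assms(4) zero_le_dist[of "z\<^sup>2" "x\<^sup>2"] zero_le_dist[of "x\<^sup>2" "y\<^sup>2"] zero_less_dist_iff[of "y\<^sup>2" "z\<^sup>2"]
    unfolding a_def b_def c_def by linarith
  have "x \<noteq> 0" "y \<noteq> 0" "z \<noteq> 0"
    using assms(1-3) by auto
  have "y / z - z / y = \<i> * of_real \<epsilon> * of_real a" "z / x - x / z = \<i> * of_real \<epsilon> * of_real b"
    "x / y - y / x = \<i> * of_real \<epsilon> * of_real c"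
    using signed_chord_unimodular(1) assms(1-3,6-8) by (simp_all add: a_def b_def c_def)
  then have "(\<i> * of_real \<epsilon>) * (of_real a * x\<^sup>2 + of_real b * y\<^sup>2 + of_real c * z\<^sup>2)
      = (\<i> * of_real \<epsilon>) * (- of_real (a + b + c) * (x * y + y * z + z * x))"
    using incenter_identity[OF \<open>x \<noteq> 0\<close> \<open>y \<noteq> 0\<close> \<open>z \<noteq> 0\<close>] by (simp add: algebra_simps)
  then have "of_real a * x\<^sup>2 + of_real b * y\<^sup>2 + of_real c * z\<^sup>2
      = - of_real (a + b + c) * (x * y + y * z + z * x)"
    using assms(5) by simp
  moreover have "incenter (x\<^sup>2) (y\<^sup>2) (z\<^sup>2)
      = (of_real a * x\<^sup>2 + of_real b * y\<^sup>2 + of_real c * z\<^sup>2) / of_real (a + b + c)"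
    by (simp add: incenter_def scaleR_conv_of_real divide_inverse_commute flip: a_def b_def c_def)
  ultimately show ?thesis
    using \<open>a + b + c \<noteq> 0\<close> by (simp del: of_real_add)
qed

lemma unimodular_square_roots_consistent:
  assumes "cmod a = 1" "cmod b = 1" "cmod c = 1"
  obtains x y z \<epsilon> where "x\<^sup>2 = a" "y\<^sup>2 = b" "z\<^sup>2 = c" "cmod x = 1" "cmod y = 1" "cmod z = 1" "\<epsilon> \<noteq> 0"
    "signed_chord y z = \<epsilon> * dist b c" "signed_chord z x = \<epsilon> * dist c a"
    "signed_chord x y = \<epsilon> * dist a b"
proof -
  define sg :: "real \<Rightarrow> real" where "sg p = (if 0 \<le> p then 1 else -1)" for p
  have sg: "sg p \<noteq> 0" "sg p * \<bar>p\<bar> = p" "\<bar>sg p\<bar> = 1" "(sg p)\<^sup>2 = 1" for p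
    by (simp_all add: sg_def)
  define x0 y0 z0 where "x0 = csqrt a" and "y0 = csqrt b" and "z0 = csqrt c"
  have unit: "cmod x0 = 1" "cmod y0 = 1" "cmod z0 = 1"
    using assms by (simp_all add: x0_def y0_def z0_def)
  have sq: "x0\<^sup>2 = a" "y0\<^sup>2 = b" "z0\<^sup>2 = c"
    by (simp_all add: x0_def y0_def z0_def)
  have flip: "signed_chord (of_real p * u) (of_real q * v) = (sg (signed_chord u v) * p * q) * dist (u\<^sup>2) (v\<^sup>2)"
    if "cmod u = 1" "cmod v = 1" for p q u v
  proof -
    have "signed_chord (of_real p * u) (of_real q * v) = p * q * (sg (signed_chord u v) * \<bar>signed_chord u v\<bar>)"
      by (simp only: signed_chord_scale sg(2))
    then show ?thesis
      by (simp add: signed_chord_unimodular(2)[OF that])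
  qed
  txt \<open>Negating one root negates the two signed chords through it; negating each root
    according to the sign of the opposite chord makes all three signs equal.\<close>
  define s1 s2 s3 where "s1 = sg (signed_chord y0 z0)" and "s2 = sg (signed_chord z0 x0)"
    and "s3 = sg (signed_chord x0 y0)"
  show ?thesis
  proof (rule that[of "of_real s1 * x0" "of_real s2 * y0" "of_real s3 * z0" "s1 * s2 * s3"])
    show "(of_real s1 * x0)\<^sup>2 = a" "(of_real s2 * y0)\<^sup>2 = b" "(of_real s3 * z0)\<^sup>2 = c"
      using sg(4) by (simp_all add: s1_def s2_def s3_def sq power_mult_distrib flip: of_real_power)
    show "cmod (of_real s1 * x0) = 1" "cmod (of_real s2 * y0) = 1" "cmod (of_real s3 * z0) = 1"
      using unit sg(3) by (simp_all add: s1_def s2_def s3_def norm_mult)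
    show "s1 * s2 * s3 \<noteq> 0"
      using sg(1) by (simp add: s1_def s2_def s3_def)
    show "signed_chord (of_real s2 * y0) (of_real s3 * z0) = s1 * s2 * s3 * dist b c"
      "signed_chord (of_real s3 * z0) (of_real s1 * x0) = s1 * s2 * s3 * dist c a"
      "signed_chord (of_real s1 * x0) (of_real s2 * y0) = s1 * s2 * s3 * dist a b"
      using flip[OF unit(2,3), of s2 s3] flip[OF unit(3,1), of s3 s1] flip[OF unit(1,2), of s1 s2]
      unfolding sq s1_def[symmetric] s2_def[symmetric] s3_def[symmetric] by (simp_all add: ac_simps)
  qed
qed

lemma triangle_unit_circle_coordinates:
  assumes "triangle A B C"
  obtains M w x y z where "w \<noteq> 0" "cmod x = 1" "cmod y = 1" "cmod z = 1"
    "A = M + w * x\<^sup>2" "B = M + w * y\<^sup>2" "C = M + w * z\<^sup>2"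
    "incenter A B C = M + w * - (x * y + y * z + z * x)"
proof -
  define M R where "M = circumcenter A B C" and "R = dist M A"
  have "dist M B = R" "dist M C = R"
    using circumcenter_equidistant[OF assms] by (simp_all add: M_def R_def)
  have "A \<noteq> B" "B \<noteq> C"
    using triangle_distinct[OF assms] by simp_all
  then have "R \<noteq> 0"
    using \<open>dist M B = R\<close> by (auto simp: R_def)
  define a b c where "a = (A - M) / R" and "b = (B - M) / R" and "c = (C - M) / R"
  have "cmod a = 1" "cmod b = 1" "cmod c = 1" "A = M + R * a" "B = M + R * b" "C = M + R * c"
    using \<open>R \<noteq> 0\<close> \<open>dist M B = R\<close> \<open>dist M C = R\<close>
    by (auto simp: a_def b_def c_def R_def norm_divide dist_norm norm_minus_commute)
  then obtain x y z \<epsilon> where xyz: "x\<^sup>2 = a" "y\<^sup>2 = b" "z\<^sup>2 = c" "cmod x = 1" "cmod y = 1" "cmod z = 1"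
    "\<epsilon> \<noteq> 0" "signed_chord y z = \<epsilon> * dist b c" "signed_chord z x = \<epsilon> * dist c a"
    "signed_chord x y = \<epsilon> * dist a b"
    using unimodular_square_roots_consistent by metis
  have "incenter A B C = M + R * incenter (x\<^sup>2) (y\<^sup>2) (z\<^sup>2)"
    using \<open>A \<noteq> B\<close> \<open>R \<noteq> 0\<close> xyz \<open>A = M + R * a\<close> \<open>B = M + R * b\<close> \<open>C = M + R * c\<close>
    by (simp add: incenter_similarity)
  also have "incenter (x\<^sup>2) (y\<^sup>2) (z\<^sup>2) = - (x * y + y * z + z * x)"
    using \<open>B \<noteq> C\<close> xyz \<open>B = M + R * b\<close> \<open>C = M + R * c\<close> by (intro incenter_unit_circle) auto
  finally show ?thesis
    using \<open>R \<noteq> 0\<close> xyz \<open>A = M + R * a\<close> \<open>B = M + R * b\<close> \<open>C = M + R * c\<close>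
    by (intro that[of "of_real R" x y z M]) simp_all
qed

lemma equilateral_squares_if_sum_eq_0:
  assumes "cmod x = 1" "cmod y = 1" "cmod z = 1" "x + y + z = 0"
  shows "equilateral (x\<^sup>2) (y\<^sup>2) (z\<^sup>2)"
proof (rule equilateral_if_sum_eq_0)
  have "x * y + y * z + z * x = 0"
    using cnj_symmetric_unimodular(1)[OF assms(1-3)] assms by auto
  moreover have "x\<^sup>2 + y\<^sup>2 + z\<^sup>2 = (x + y + z)\<^sup>2 - 2 * (x * y + y * z + z * x)"
    by (simp add: power2_eq_square algebra_simps)
  ultimately show "x\<^sup>2 + y\<^sup>2 + z\<^sup>2 = 0"
    using assms(4) by simp
qed (use assms in \<open>simp_all add: norm_power\<close>)

lemma add_ne_0_if_power2_ne:
  fixes x y :: "'a::comm_ring_1"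
  shows "x\<^sup>2 \<noteq> y\<^sup>2 \<Longrightarrow> x + y \<noteq> 0"
  by (metis add_eq_0_iff power2_minus)

text \<open>The circumcenter of \<open>BIC\<close> is the midpoint of the arc \<open>BC\<close> (incenter--excenter lemma).\<close>
lemma circumcenter_BIC_unit_circle:
  assumes "cmod x = 1" "cmod y = 1" "cmod z = 1" "x\<^sup>2 \<noteq> y\<^sup>2" "y\<^sup>2 \<noteq> z\<^sup>2" "z\<^sup>2 \<noteq> x\<^sup>2"
  defines "e \<equiv> x * y + y * z + z * x"
  shows "triangle (y\<^sup>2) (- e) (z\<^sup>2)" and "circumcenter (y\<^sup>2) (- e) (z\<^sup>2) = - (y * z)"
proof -
  have "y\<^sup>2 + e = (x + y) * (y + z)" "z\<^sup>2 + e = (z + x) * (y + z)"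
    by (simp_all add: e_def power2_eq_square algebra_simps)
  then have "y\<^sup>2 + e \<noteq> 0" "z\<^sup>2 + e \<noteq> 0"
    using add_ne_0_if_power2_ne[OF assms(4)] add_ne_0_if_power2_ne[OF assms(5)]
      add_ne_0_if_power2_ne[OF assms(6)] by simp_all
  then have distinct: "y\<^sup>2 \<noteq> - e" "- e \<noteq> z\<^sup>2" "z\<^sup>2 \<noteq> y\<^sup>2"
    using assms(5) by (auto simp: eq_neg_iff_add_eq_0 neg_eq_iff_add_eq_0 add.commute)
  have "- (y * z) - y\<^sup>2 = - y * (y + z)" "- (y * z) - - e = x * (y + z)" "- (y * z) - z\<^sup>2 = - z * (y + z)"
    by (simp_all add: e_def power2_eq_square algebra_simps)
  then have "dist (- (y * z)) (y\<^sup>2) = dist (- (y * z)) (- e)" "dist (- (y * z)) (- e) = dist (- (y * z)) (z\<^sup>2)"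
    using assms(1-3) by (simp_all only: dist_norm norm_mult norm_minus_cancel)
  then show "triangle (y\<^sup>2) (- e) (z\<^sup>2)" "circumcenter (y\<^sup>2) (- e) (z\<^sup>2) = - (y * z)"
    using triangle_if_concyclic[OF distinct] circumcenter_eqI by blast+
qed

lemma circumcenter_AHBHC_unit_circle:
  assumes "cmod x = 1" "cmod y = 1" "cmod z = 1" "x\<^sup>2 \<noteq> y\<^sup>2" "y\<^sup>2 \<noteq> z\<^sup>2" "z\<^sup>2 \<noteq> x\<^sup>2"
  defines "e \<equiv> x * y + y * z + z * x"
  shows "triangle (x\<^sup>2) ((z + x)\<^sup>2 - e) ((x + y)\<^sup>2 - e)"
    and "circumcenter (x\<^sup>2) ((z + x)\<^sup>2 - e) ((x + y)\<^sup>2 - e) = (x + y + z) * x - 2 * e"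
proof -
  define P r where "P = (x + y + z) * x - 2 * e" and "r = cmod (2 * x + y + z)"
  have "x \<noteq> 0" "y \<noteq> 0" "z \<noteq> 0"
    using assms(1-3) by auto
  have "x * y + 2 * y * z + z * x = x * y * z * cnj (2 * x + y + z)"
    using assms(1-3) \<open>x \<noteq> 0\<close> \<open>y \<noteq> 0\<close> \<open>z \<noteq> 0\<close> by (simp add: cnj_unimodular field_simps)
  then have "cmod (x * y + 2 * y * z + z * x) = r"
    using assms(1-3) by (simp only: norm_mult complex_mod_cnj r_def)
  moreover have "P - x\<^sup>2 = - (x * y + 2 * y * z + z * x)" "P - ((z + x)\<^sup>2 - e) = - z * (2 * x + y + z)"
    "P - ((x + y)\<^sup>2 - e) = - y * (2 * x + y + z)"
    by (simp_all add: P_def e_def power2_eq_square algebra_simps)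
  ultimately have dist: "dist P (x\<^sup>2) = r" "dist P ((z + x)\<^sup>2 - e) = r" "dist P ((x + y)\<^sup>2 - e) = r"
    using assms(1-3) by (simp_all only: dist_norm norm_minus_cancel norm_mult r_def)
  have "x\<^sup>2 - ((z + x)\<^sup>2 - e) = (y - z) * (z + x)" "x\<^sup>2 - ((x + y)\<^sup>2 - e) = (z - y) * (x + y)"
    by (simp_all add: e_def power2_eq_square algebra_simps)
  then have "x\<^sup>2 \<noteq> (z + x)\<^sup>2 - e" "x\<^sup>2 \<noteq> (x + y)\<^sup>2 - e"
    using add_ne_0_if_power2_ne[OF assms(4)] add_ne_0_if_power2_ne[OF assms(6)] assms(5) by auto
  then have "r \<noteq> 0"
    using dist(1,2) by auto
  have "(z + x)\<^sup>2 - e - ((x + y)\<^sup>2 - e) = (z - y) * (2 * x + y + z)"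
    by (simp add: power2_eq_square algebra_simps)
  then have "(z + x)\<^sup>2 - e \<noteq> (x + y)\<^sup>2 - e"
    using \<open>r \<noteq> 0\<close> assms(5) by (auto simp: r_def)
  then show "triangle (x\<^sup>2) ((z + x)\<^sup>2 - e) ((x + y)\<^sup>2 - e)"
    "circumcenter (x\<^sup>2) ((z + x)\<^sup>2 - e) ((x + y)\<^sup>2 - e) = (x + y + z) * x - 2 * e"
    using \<open>x\<^sup>2 \<noteq> (z + x)\<^sup>2 - e\<close> \<open>x\<^sup>2 \<noteq> (x + y)\<^sup>2 - e\<close> dist triangle_if_concyclic circumcenter_eqI
    unfolding P_def by metis+
qed

lemma orthocenter_BIC:
  assumes "w \<noteq> 0" "cmod x = 1" "cmod y = 1" "cmod z = 1" "x\<^sup>2 \<noteq> y\<^sup>2" "y\<^sup>2 \<noteq> z\<^sup>2" "z\<^sup>2 \<noteq> x\<^sup>2"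
  defines "e \<equiv> x * y + y * z + z * x"
  shows "orthocenter (M + w * y\<^sup>2) (M + w * - e) (M + w * z\<^sup>2) = M + w * ((y + z)\<^sup>2 - e)"
proof -
  note BIC = circumcenter_BIC_unit_circle[OF assms(2-7), folded e_def]
  have "orthocenter (M + w * y\<^sup>2) (M + w * - e) (M + w * z\<^sup>2) = M + w * orthocenter (y\<^sup>2) (- e) (z\<^sup>2)"
    by (rule orthocenter_similarity[OF assms(1) BIC(1)])
  also have "orthocenter (y\<^sup>2) (- e) (z\<^sup>2) = (y + z)\<^sup>2 - e"
    using BIC by (simp add: orthocenter_eq_circumcenter power2_eq_square algebra_simps)
  finally show ?thesis .
qed

lemma circumcenter_AHBHC:
  fixes M w x y z :: complex
  assumes "w \<noteq> 0" "cmod x = 1" "cmod y = 1" "cmod z = 1" "x\<^sup>2 \<noteq> y\<^sup>2" "y\<^sup>2 \<noteq> z\<^sup>2" "z\<^sup>2 \<noteq> x\<^sup>2"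
  defines "e \<equiv> x * y + y * z + z * x"
  defines "I \<equiv> M + w * - e"
  shows "circumcenter (M + w * x\<^sup>2) (orthocenter (M + w * z\<^sup>2) I (M + w * x\<^sup>2))
      (orthocenter (M + w * x\<^sup>2) I (M + w * y\<^sup>2))
    = M + w * ((x + y + z) * x - 2 * e)"
proof -
  have "y * z + z * x + x * y = e" "z * x + x * y + y * z = e"
    by (simp_all add: e_def ac_simps)
  then have "orthocenter (M + w * z\<^sup>2) I (M + w * x\<^sup>2) = M + w * ((z + x)\<^sup>2 - e)"
    "orthocenter (M + w * x\<^sup>2) I (M + w * y\<^sup>2) = M + w * ((x + y)\<^sup>2 - e)"
    using orthocenter_BIC[OF assms(1) assms(3,4,2) assms(6,7,5)]
      orthocenter_BIC[OF assms(1) assms(4,2,3) assms(7,5,6)]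
    by (simp_all add: I_def)
  then show ?thesis
    using circumcenter_AHBHC_unit_circle[OF assms(2-7), folded e_def] assms(1)
    by (simp add: circumcenter_similarity)
qed

lemma triangle_OAOBOC:
  fixes M w x y z :: complex
  assumes "w \<noteq> 0" "cmod x = 1" "cmod y = 1" "cmod z = 1" "x \<noteq> y" "y \<noteq> z" "z \<noteq> x" "x + y + z \<noteq> 0"
  defines "e \<equiv> x * y + y * z + z * x" and "s \<equiv> x + y + z"
  defines "O\<^sub>A \<equiv> M + w * (s * x - 2 * e)" and "O\<^sub>B \<equiv> M + w * (s * y - 2 * e)"
    and "O\<^sub>C \<equiv> M + w * (s * z - 2 * e)"
  shows "triangle O\<^sub>A O\<^sub>B O\<^sub>C \<and> M + w * (x\<^sup>2 + y\<^sup>2 + z\<^sup>2) = orthocenter O\<^sub>A O\<^sub>B O\<^sub>C \<and>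
    euler_reflection_point (M + w * - e) O\<^sub>A O\<^sub>B O\<^sub>C"
proof -
  define M' w' where "M' = M - 2 * w * e" and "w' = w * s"
  have "s \<noteq> 0" "w' \<noteq> 0"
    using assms(1,8) by (simp_all add: w'_def s_def)
  have O: "O\<^sub>A = M' + w' * x" "O\<^sub>B = M' + w' * y" "O\<^sub>C = M' + w' * z"
    by (simp_all add: O\<^sub>A_def O\<^sub>B_def O\<^sub>C_def M'_def w'_def algebra_simps)
  have H: "M + w * (x\<^sup>2 + y\<^sup>2 + z\<^sup>2) = M' + w' * s"
    by (simp add: M'_def w'_def s_def e_def power2_eq_square algebra_simps)
  have I: "M + w * - e = M' + w' * (e / s)"
    using \<open>s \<noteq> 0\<close> by (simp add: M'_def w'_def field_simps)
  note tri = circumcenter_unit_circle(1)[OF assms(2-7)]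
  show ?thesis
    unfolding O H I
  proof (intro conjI)
    show "triangle (M' + w' * x) (M' + w' * y) (M' + w' * z)"
      using tri \<open>w' \<noteq> 0\<close> by (simp add: triangle_similarity)
    show "M' + w' * s = orthocenter (M' + w' * x) (M' + w' * y) (M' + w' * z)"
      using orthocenter_similarity[OF \<open>w' \<noteq> 0\<close> tri] orthocenter_unit_circle[OF assms(2-7)]
      by (simp add: s_def)
    show "euler_reflection_point (M' + w' * (e / s)) (M' + w' * x) (M' + w' * y) (M' + w' * z)"
      using euler_reflection_point_similarity[OF \<open>w' \<noteq> 0\<close> euler_reflection_point_unit_circle[OF assms(2-8)]]
      unfolding e_def s_def .
  qed
qed

theorem corollary5p4:
  fixes A B C :: complex
  assumes "triangle A B C"
    and "\<not> equilateral A B C"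
  defines "I \<equiv> incenter A B C"
    and "H \<equiv> orthocenter A B C"
  defines "H\<^sub>A \<equiv> orthocenter B I C"
    and "H\<^sub>B \<equiv> orthocenter C I A"
    and "H\<^sub>C \<equiv> orthocenter A I B"
  defines "O\<^sub>A \<equiv> circumcenter A H\<^sub>B H\<^sub>C"
    and "O\<^sub>B \<equiv> circumcenter B H\<^sub>C H\<^sub>A"
    and "O\<^sub>C \<equiv> circumcenter C H\<^sub>A H\<^sub>B"
  shows "triangle O\<^sub>A O\<^sub>B O\<^sub>C \<and> H = orthocenter O\<^sub>A O\<^sub>B O\<^sub>C \<and>
         euler_reflection_point I O\<^sub>A O\<^sub>B O\<^sub>C"
proof -
  obtain M w x y z where w: "w \<noteq> 0" and unit: "cmod x = 1" "cmod y = 1" "cmod z = 1"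
    and ABC: "A = M + w * x\<^sup>2" "B = M + w * y\<^sup>2" "C = M + w * z\<^sup>2"
    and I: "I = M + w * - (x * y + y * z + z * x)"
    using triangle_unit_circle_coordinates[OF assms(1)] unfolding I_def by metis
  have sq: "x\<^sup>2 \<noteq> y\<^sup>2" "y\<^sup>2 \<noteq> z\<^sup>2" "z\<^sup>2 \<noteq> x\<^sup>2"
    using triangle_distinct[OF assms(1)] w unfolding ABC by auto
  have "x + y + z \<noteq> 0"
    using assms(2) equilateral_squares_if_sum_eq_0[OF unit] equilateral_similarity[OF w]
    unfolding ABC by auto
  have cyclic: "y * z + z * x + x * y = x * y + y * z + z * x" "z * x + x * y + y * z = x * y + y * z + z * x"
    "y + z + x = x + y + z" "z + x + y = x + y + z"
    by (simp_all add: ac_simps)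
  have "O\<^sub>A = M + w * ((x + y + z) * x - 2 * (x * y + y * z + z * x))"
    "O\<^sub>B = M + w * ((x + y + z) * y - 2 * (x * y + y * z + z * x))"
    "O\<^sub>C = M + w * ((x + y + z) * z - 2 * (x * y + y * z + z * x))"
    using circumcenter_AHBHC[OF w unit sq] circumcenter_AHBHC[OF w unit(2,3,1) sq(2,3,1), unfolded cyclic]
      circumcenter_AHBHC[OF w unit(3,1,2) sq(3,1,2), unfolded cyclic]
    unfolding O\<^sub>A_def O\<^sub>B_def O\<^sub>C_def H\<^sub>A_def H\<^sub>B_def H\<^sub>C_def I ABC by simp_all
  moreover have "H = M + w * (x\<^sup>2 + y\<^sup>2 + z\<^sup>2)"
    using w unit sq unfolding H_def ABC
    by (simp add: orthocenter_similarity circumcenter_unit_circle orthocenter_unit_circle norm_power)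
  ultimately show ?thesis
    using triangle_OAOBOC[OF w unit] sq \<open>x + y + z \<noteq> 0\<close> unfolding I by auto
qed

end
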